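(* Let $X$ be a reflexive Banach space with norm $\|\cdot\|$, dual space $X^*$ with dual norm $\|\cdot\|_*$ and canonical pairing $\langle\cdot,\cdot\rangle$. Let $L>0$, $\sigma>0$, $N\ge1$, and let real coefficients $\{a_{k,i}\}_{0\le i<k\le N}$, $\{b_{k,i}\}_{0\le i\le k\le N}$ be given with the convention $b_{0,0}=-1$. Let $\{u_i\}_{i=0}^N$ be a positive nondecreasing sequence of reals and set $v_i=1/u_{N-i}$ for $i=0,\dots,N$. Define $\mathbf{U}_{\mathcal A},\mathbf{V}_{\mathcal B}\colon (X^* )^{N+1}\times X^{N+1}\to\mathbb{R}$ as follows. For $(A_0,\dots,A_N,B_0,\dots,B_N)$, put $A_{N+1}=0$, $x_0=B_0$, $x_{k+1}=x_k-\sum_{i=0}^{k+1}b_{k+1,i}B_i$ ($k=0,\dots,N-1$), and \[ \mathbf{U}_{\mathcal A}=\sum_{k=0}^{N-1}\frac{u_k}{2L}\|A_k-A_{k+1}\|_*^2+\sum_{k=0}^{N-1}\frac{\sigma}{2}\|B_k-B_{k+1}\|^2+\sum_{k=0}^{N-1}\Big\langle\sum_{i=0}^{k}a_{k+1,i}A_i,\,B_{k+1}\Big\rangle-\sum_{k=0}^{N}u_k\langle A_k-A_{k+1},x_k\rangle . \] For $(C_0,\dots,C_N,D_0,\dots,D_N)$, put \[ \mathbf{V}_{\mathcal B}=\sum_{k=0}^{N-1}\frac{v_{k+1}}{2L}\|C_k-C_{k+1}\|_*^2+\sum_{k=0}^{N-1}\frac{\sigma}{2}\|D_k-D_{k+1}\|^2+\sum_{k=0}^{N}\Big\langle\sum_{i=0}^{k}b_{N-i,N-k}C_i,\,D_k\Big\rangle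 \] \[ \qquad+\sum_{k=0}^{N-1}\Big\langle v_{k+1}C_{k+1}-\sum_{j=0}^{k}(v_{j+1}-v_j)C_j,\ \sum_{i=0}^{k}a_{N-i,N-1-k}D_i\Big\rangle . \] Then \[ \inf_{(X^* )^{N+1}\times X^{N+1}}\mathbf{U}_{\mathcal A}=\inf_{(X^* )^{N+1}\times X^{N+1}}\mathbf{V}_{\mathcal B} \] (as elements of $\mathbb{R}\cup\{-\infty\}$).
   Context: Here $\mathbf{U}_{\mathcal A}$ is the residual (after telescoping) of a standard energy-function proof of a bound on $f(x_N)-f(x)$ for the CFOM $y_{k+1}=y_k-\sum_{i\le k}a_{k+1,i}\nabla f(x_i)$, $x_{k+1}=x_k-\sum_{i\le k+1}b_{k+1,i}\nabla\phi^*(y_i)$, with $A_i$ standing for $\nabla f(x_i)$ and $B_i$ for $\nabla\phi^*(y_i)$; $\mathbf{V}_{\mathcal B}$ is the analogous residual for its mirror dual $q_{k+1}=q_k-\sum_{i\le k}a_{N-i,N-1-k}\nabla\psi^*(r_i)$, $r_{k+1}=r_k-\sum_{i\le k+1}b_{N-i,N-1-k}\nabla f(q_i)$, $r_0=-b_{N,N}\nabla f(q_0)$, with $C_i$ standing for $\nabla f(q_i)$ and $D_i$ for $\nabla\psi^*(r_i)$. The claim is purely about the two explicit functions above. *)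

theory Defs
  imports "HOL-Analysis.Analysis"
begin

(* The dual space of X is the type of bounded linear functionals ('a =>L real)
  with the operator (dual) norm; the pairing is function application. *)

definition reflexive_space :: "'a::real_normed_vector itself \<Rightarrow> bool" where
  "reflexive_space _ \<longleftrightarrow>
     (\<forall>\<Phi> :: ('a \<Rightarrow>\<^sub>L real) \<Rightarrow>\<^sub>L real. \<exists>x::'a. \<forall>f. blinfun_apply \<Phi> f = blinfun_apply f x)"

fun xseq :: "(nat \<Rightarrow> nat \<Rightarrow> real) \<Rightarrow> (nat \<Rightarrow> 'a::real_vector) \<Rightarrow> nat \<Rightarrow> 'a" where
  "xseq b B 0 = B 0"
| "xseq b B (Suc k) = xseq b B k - (\<Sum>i\<le>Suc k. b (Suc k) i *\<^sub>R B i)"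

definition UA :: "nat \<Rightarrow> real \<Rightarrow> real \<Rightarrow> (nat \<Rightarrow> nat \<Rightarrow> real) \<Rightarrow> (nat \<Rightarrow> nat \<Rightarrow> real)
    \<Rightarrow> (nat \<Rightarrow> real) \<Rightarrow> (nat \<Rightarrow> ('a::real_normed_vector \<Rightarrow>\<^sub>L real)) \<Rightarrow> (nat \<Rightarrow> 'a) \<Rightarrow> real" where
  "UA N L \<sigma> a b u A B =
    (let A' = A(Suc N := 0) in
      (\<Sum>k<N. u k / (2 * L) * (norm (A k - A (Suc k)))\<^sup>2)
    + (\<Sum>k<N. \<sigma> / 2 * (norm (B k - B (Suc k)))\<^sup>2)
    + (\<Sum>k<N. blinfun_apply (\<Sum>i\<le>k. a (Suc k) i *\<^sub>R A i) (B (Suc k)))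
    - (\<Sum>k\<le>N. u k * blinfun_apply (A' k - A' (Suc k)) (xseq b B k)))"

definition VB :: "nat \<Rightarrow> real \<Rightarrow> real \<Rightarrow> (nat \<Rightarrow> nat \<Rightarrow> real) \<Rightarrow> (nat \<Rightarrow> nat \<Rightarrow> real)
    \<Rightarrow> (nat \<Rightarrow> real) \<Rightarrow> (nat \<Rightarrow> ('a::real_normed_vector \<Rightarrow>\<^sub>L real)) \<Rightarrow> (nat \<Rightarrow> 'a) \<Rightarrow> real" where
  "VB N L \<sigma> a b u C D =
    (let v = (\<lambda>i. 1 / u (N - i)) in
      (\<Sum>k<N. v (Suc k) / (2 * L) * (norm (C k - C (Suc k)))\<^sup>2)
    + (\<Sum>k<N. \<sigma> / 2 * (norm (D k - D (Suc k)))\<^sup>2)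
    + (\<Sum>k\<le>N. blinfun_apply (\<Sum>i\<le>k. b (N - i) (N - k) *\<^sub>R C i) (D k))
    + (\<Sum>k<N. blinfun_apply (v (Suc k) *\<^sub>R C (Suc k) - (\<Sum>j\<le>k. (v (Suc j) - v j) *\<^sub>R C j))
                 (\<Sum>i\<le>k. a (N - i) (N - 1 - k) *\<^sub>R D i)))"

end

theory Submission
  imports Defs
begin

text \<open>The substitution \<open>C k = - (\<Sum>m=N-k..N. u m (A m - A (m+1)))\<close>, \<open>D k = - B (N-k)\<close>
  (with \<open>A (N+1) = 0\<close>) is an invertible linear change of variables that transforms
  \<open>U\<close> term by term into \<open>V\<close>: the two squared-norm sums are reindexed by \<open>k \<mapsto> N-1-k\<close>,
  Abel summation turns \<open>v (k+1) C (k+1) - (\<Sum>j\<le>k. (v (j+1) - v j) C j)\<close> back into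
  \<open>- A (N-1-k)\<close>, and the bilinear terms agree after reindexing finite double and triple sums.
  Hence both functions have the same range, and so the same infimum.\<close>

definition mirror_grad :: "nat \<Rightarrow> (nat \<Rightarrow> real) \<Rightarrow> (nat \<Rightarrow> ('a::real_normed_vector \<Rightarrow>\<^sub>L real))
    \<Rightarrow> nat \<Rightarrow> ('a \<Rightarrow>\<^sub>L real)" where
  "mirror_grad N u A k = - (\<Sum>m=N-k..N. u m *\<^sub>R ((A(Suc N := 0)) m - (A(Suc N := 0)) (Suc m)))"

definition unmirror_grad :: "nat \<Rightarrow> (nat \<Rightarrow> real) \<Rightarrow> (nat \<Rightarrow> ('a::real_normed_vector \<Rightarrow>\<^sub>L real))
    \<Rightarrow> nat \<Rightarrow> ('a \<Rightarrow>\<^sub>L real)" where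
  "unmirror_grad N u C k =
     (\<Sum>j=k..<N. (1 / u j) *\<^sub>R (C (N - Suc j) - C (N - j))) - (1 / u N) *\<^sub>R C 0"

definition reflect :: "nat \<Rightarrow> (nat \<Rightarrow> 'a::real_vector) \<Rightarrow> nat \<Rightarrow> 'a" where
  "reflect N B k = - B (N - k)"

lemma range_eq_change_of_variables:
  assumes "\<And>x. g (\<phi> x) = f x" and "\<And>y. f (\<psi> y) = g y"
  shows "range f = range g"
proof (intro equalityI subsetI)
  show "y \<in> range g" if "y \<in> range f" for y
    using that assms(1) by (metis rangeE rangeI)
  show "y \<in> range f" if "y \<in> range g" for y
    using that assms(2) by (metis rangeE rangeI)
qed

lemma xseq_closed_form:
  assumes "b 0 0 = -1"
  shows "xseq b B k = - (\<Sum>m\<le>k. \<Sum>i\<le>m. b m i *\<^sub>R B i)"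
  using assms by (induction k) auto

lemma sum_atLeastAtMost_diff_Suc:
  fixes f :: "nat \<Rightarrow> 'b::comm_monoid_add"
  assumes "k < N"
  shows "(\<Sum>m=N - Suc k..N. f m) = f (N - Suc k) + (\<Sum>m=N - k..N. f m)"
  using sum.atLeast_Suc_atMost[of "N - Suc k" N f] assms by (simp add: Suc_diff_Suc)

lemma mirror_grad_0: "mirror_grad N u A 0 = - (u N *\<^sub>R A N)"
  unfolding mirror_grad_def by simp

lemma mirror_grad_diff:
  assumes "k < N"
  shows "mirror_grad N u A k - mirror_grad N u A (Suc k) = u (N - Suc k) *\<^sub>R (A (N - Suc k) - A (N - k))"
proof -
  have "N - Suc k \<noteq> Suc N" "N - k \<noteq> Suc N" "Suc (N - Suc k) = N - k"
    using assms by auto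
  then have "(A(Suc N := 0)) (N - Suc k) - (A(Suc N := 0)) (Suc (N - Suc k)) = A (N - Suc k) - A (N - k)"
    by simp
  then show ?thesis
    unfolding mirror_grad_def sum_atLeastAtMost_diff_Suc[OF assms] by simp
qed

lemma mirror_grad_abel_summation:
  assumes "\<forall>i\<le>N. u i \<noteq> 0" and "k \<le> N"
  shows "(1 / u (N - k)) *\<^sub>R mirror_grad N u A k
      - (\<Sum>j<k. (1 / u (N - Suc j) - 1 / u (N - j)) *\<^sub>R mirror_grad N u A j) = - A (N - k)"
  using assms(2)
proof (induction k)
  case 0
  then show ?case using assms(1) by (simp add: mirror_grad_0)
next
  case (Suc k)
  then have k: "k < N" by simp
  have u_nonzero: "u (N - Suc k) \<noteq> 0" using assms(1) by simp
  have step: "mirror_grad N u A (Suc k)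
      = mirror_grad N u A k - u (N - Suc k) *\<^sub>R (A (N - Suc k) - A (N - k))"
    using mirror_grad_diff[OF k, of u A] by (simp add: algebra_simps)
  have "(1 / u (N - Suc k)) *\<^sub>R mirror_grad N u A (Suc k)
      - (\<Sum>j<Suc k. (1 / u (N - Suc j) - 1 / u (N - j)) *\<^sub>R mirror_grad N u A j)
    = ((1 / u (N - k)) *\<^sub>R mirror_grad N u A k
      - (\<Sum>j<k. (1 / u (N - Suc j) - 1 / u (N - j)) *\<^sub>R mirror_grad N u A j))
      - (1 / u (N - Suc k)) *\<^sub>R (u (N - Suc k) *\<^sub>R (A (N - Suc k) - A (N - k)))"
    unfolding step by (simp add: algebra_simps)
  also have "\<dots> = - A (N - Suc k)" using Suc k u_nonzero by simp
  finally show ?case .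
qed

lemma mirror_grad_unmirror_grad:
  assumes "\<forall>i\<le>N. u i \<noteq> 0" and "k \<le> N"
  shows "mirror_grad N u (unmirror_grad N u C) k = C k"
  using assms(2)
proof (induction k)
  case 0
  then show ?case using assms(1) by (simp add: mirror_grad_0 unmirror_grad_def)
next
  case (Suc k)
  then have k: "k < N" by simp
  have "N - Suc (N - Suc k) = k" "N - (N - Suc k) = Suc k" "Suc (N - Suc k) = N - k"
    using k by auto
  then have "unmirror_grad N u C (N - Suc k) - unmirror_grad N u C (N - k)
      = (1 / u (N - Suc k)) *\<^sub>R (C k - C (Suc k))"
    using sum.atLeast_Suc_lessThan[of "N - Suc k" N "\<lambda>j. (1 / u j) *\<^sub>R (C (N - Suc j) - C (N - j))"] k
    unfolding unmirror_grad_def by simp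
  then have "u (N - Suc k) *\<^sub>R (unmirror_grad N u C (N - Suc k) - unmirror_grad N u C (N - k))
      = C k - C (Suc k)"
    using assms(1) by simp
  then show ?case
    using Suc k mirror_grad_diff[OF k, of u "unmirror_grad N u C"] by (simp add: algebra_simps)
qed

lemma reflect_reflect: "k \<le> N \<Longrightarrow> reflect N (reflect N D) k = D k"
  unfolding reflect_def by simp

lemma sum_norm_diff_mirror_grad:
  assumes "\<forall>i\<le>N. u i \<noteq> 0"
  shows "(\<Sum>k<N. 1 / u (N - Suc k) / (2 * L) * (norm (mirror_grad N u A k - mirror_grad N u A (Suc k)))\<^sup>2)
       = (\<Sum>k<N. u k / (2 * L) * (norm (A k - A (Suc k)))\<^sup>2)"
proof -
  have "(\<Sum>k<N. 1 / u (N - Suc k) / (2 * L) * (norm (mirror_grad N u A k - mirror_grad N u A (Suc k)))\<^sup>2)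
     = (\<Sum>k<N. (\<lambda>j. u j / (2 * L) * (norm (A j - A (Suc j)))\<^sup>2) (N - Suc k))"
  proof (rule sum.cong)
    fix k assume "k \<in> {..<N}"
    then have k: "k < N" by simp
    then have "u (N - Suc k) \<noteq> 0" "Suc (N - Suc k) = N - k" using assms by auto
    then show "1 / u (N - Suc k) / (2 * L) * (norm (mirror_grad N u A k - mirror_grad N u A (Suc k)))\<^sup>2
      = (\<lambda>j. u j / (2 * L) * (norm (A j - A (Suc j)))\<^sup>2) (N - Suc k)"
      unfolding mirror_grad_diff[OF k]
      by (simp only: norm_scaleR power_mult_distrib power2_abs) (simp add: field_simps power2_eq_square)
  qed simp
  also have "\<dots> = (\<Sum>k<N. u k / (2 * L) * (norm (A k - A (Suc k)))\<^sup>2)"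
    by (rule sum.nat_diff_reindex)
  finally show ?thesis .
qed

lemma sum_norm_diff_reflect:
  "(\<Sum>k<N. h (norm (reflect N B k - reflect N B (Suc k)))) = (\<Sum>k<N. h (norm (B k - B (Suc k))))"
proof -
  have "(\<Sum>k<N. h (norm (reflect N B k - reflect N B (Suc k))))
      = (\<Sum>k<N. (\<lambda>j. h (norm (B j - B (Suc j)))) (N - Suc k))"
  proof (rule sum.cong)
    fix k assume "k \<in> {..<N}"
    then have "Suc (N - Suc k) = N - k" by simp
    moreover have "norm (reflect N B k - reflect N B (Suc k)) = norm (B (N - Suc k) - B (N - k))"
      unfolding reflect_def by (simp add: norm_minus_commute)
    ultimately show "h (norm (reflect N B k - reflect N B (Suc k)))
        = (\<lambda>j. h (norm (B j - B (Suc j)))) (N - Suc k)"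
      by simp
  qed simp
  also have "\<dots> = (\<Sum>k<N. h (norm (B k - B (Suc k))))"
    by (rule sum.nat_diff_reindex)
  finally show ?thesis .
qed

lemma sum_b_pairing_mirror:
  assumes "b 0 0 = -1"
  shows "(\<Sum>k\<le>N. blinfun_apply (\<Sum>i\<le>k. b (N - i) (N - k) *\<^sub>R mirror_grad N u A i) (reflect N B k))
   = - (\<Sum>k\<le>N. u k * blinfun_apply ((A(Suc N := 0)) k - (A(Suc N := 0)) (Suc k)) (xseq b B k))"
proof -
  define dA where "dA = (\<lambda>m. (A(Suc N := 0)) m - (A(Suc N := 0)) (Suc m))"
  have C: "mirror_grad N u A i = - (\<Sum>m=N-i..N. u m *\<^sub>R dA m)" for i
    unfolding mirror_grad_def dA_def by simp
  let ?S = "Sigma {..N} (\<lambda>k. Sigma {..k} (\<lambda>i. {N-i..N}))"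
  let ?T = "Sigma {..N} (\<lambda>k. Sigma {..k} (\<lambda>m. {..m}))"
  have "(\<Sum>k\<le>N. blinfun_apply (\<Sum>i\<le>k. b (N - i) (N - k) *\<^sub>R mirror_grad N u A i) (reflect N B k))
      = (\<Sum>k\<le>N. \<Sum>i\<le>k. \<Sum>m=N-i..N. b (N - i) (N - k) * (u m * blinfun_apply (dA m) (B (N - k))))"
    unfolding C reflect_def by (simp add: blinfun.bilinear_simps sum_distrib_left sum_negf)
  also have "\<dots> = (\<Sum>(k,i,m)\<in>?S. b (N - i) (N - k) * (u m * blinfun_apply (dA m) (B (N - k))))"
    by (simp add: sum.Sigma)
  also have "\<dots> = (\<Sum>(k,m,i)\<in>?T. u k * (b m i * blinfun_apply (dA k) (B i)))"
    by (rule sum.reindex_bij_witness[where j="\<lambda>(k,i,m). (m, N - i, N - k)" and i="\<lambda>(k,m,i). (N - i, N - m, k)"])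
       auto
  also have "\<dots> = (\<Sum>k\<le>N. \<Sum>m\<le>k. \<Sum>i\<le>m. u k * (b m i * blinfun_apply (dA k) (B i)))"
    by (simp add: sum.Sigma)
  also have "\<dots> = - (\<Sum>k\<le>N. u k * blinfun_apply (dA k) (xseq b B k))"
    unfolding xseq_closed_form[of b, OF assms]
    by (simp add: blinfun.bilinear_simps sum_distrib_left sum_negf)
  finally show ?thesis unfolding dA_def .
qed

lemma sum_a_pairing_mirror:
  assumes "\<forall>i\<le>N. u i \<noteq> 0"
  shows "(\<Sum>k<N. blinfun_apply ((1 / u (N - Suc k)) *\<^sub>R mirror_grad N u A (Suc k)
              - (\<Sum>j\<le>k. (1 / u (N - Suc j) - 1 / u (N - j)) *\<^sub>R mirror_grad N u A j))
              (\<Sum>i\<le>k. a (N - i) (N - 1 - k) *\<^sub>R reflect N B i))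
   = (\<Sum>k<N. blinfun_apply (\<Sum>i\<le>k. a (Suc k) i *\<^sub>R A i) (B (Suc k)))"
proof -
  let ?S = "Sigma {..<N} (\<lambda>k. {..k})"
  have "(\<Sum>k<N. blinfun_apply ((1 / u (N - Suc k)) *\<^sub>R mirror_grad N u A (Suc k)
              - (\<Sum>j\<le>k. (1 / u (N - Suc j) - 1 / u (N - j)) *\<^sub>R mirror_grad N u A j))
              (\<Sum>i\<le>k. a (N - i) (N - 1 - k) *\<^sub>R reflect N B i))
     = (\<Sum>k<N. \<Sum>i\<le>k. a (N - i) (N - 1 - k) * blinfun_apply (A (N - Suc k)) (B (N - i)))"
  proof (rule sum.cong)
    fix k assume "k \<in> {..<N}"
    then have "(1 / u (N - Suc k)) *\<^sub>R mirror_grad N u A (Suc k)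
        - (\<Sum>j\<le>k. (1 / u (N - Suc j) - 1 / u (N - j)) *\<^sub>R mirror_grad N u A j) = - A (N - Suc k)"
      using mirror_grad_abel_summation[OF assms, of "Suc k" A] by (simp add: lessThan_Suc_atMost)
    then show "blinfun_apply ((1 / u (N - Suc k)) *\<^sub>R mirror_grad N u A (Suc k)
              - (\<Sum>j\<le>k. (1 / u (N - Suc j) - 1 / u (N - j)) *\<^sub>R mirror_grad N u A j))
              (\<Sum>i\<le>k. a (N - i) (N - 1 - k) *\<^sub>R reflect N B i)
       = (\<Sum>i\<le>k. a (N - i) (N - 1 - k) * blinfun_apply (A (N - Suc k)) (B (N - i)))"
      unfolding reflect_def by (simp add: blinfun.bilinear_simps)
  qed simp
  also have "\<dots> = (\<Sum>(k,i)\<in>?S. a (N - i) (N - 1 - k) * blinfun_apply (A (N - Suc k)) (B (N - i)))"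
    by (simp add: sum.Sigma)
  also have "\<dots> = (\<Sum>(k,i)\<in>?S. a (Suc k) i * blinfun_apply (A i) (B (Suc k)))"
    by (rule sum.reindex_bij_witness[where i="\<lambda>(k,i). (N - 1 - i, N - 1 - k)" and j="\<lambda>(k,i). (N - 1 - i, N - 1 - k)"])
       (auto simp: Suc_diff_Suc)
  also have "\<dots> = (\<Sum>k<N. blinfun_apply (\<Sum>i\<le>k. a (Suc k) i *\<^sub>R A i) (B (Suc k)))"
    by (simp add: sum.Sigma blinfun.bilinear_simps)
  finally show ?thesis .
qed

lemma VB_mirror_eq_UA:
  assumes "b 0 0 = -1" and "\<forall>i\<le>N. u i \<noteq> 0"
  shows "VB N L \<sigma> a b u (mirror_grad N u A) (reflect N B) = UA N L \<sigma> a b u A B"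
  unfolding VB_def UA_def Let_def sum_norm_diff_mirror_grad[OF assms(2)]
    sum_norm_diff_reflect[of "\<lambda>t. \<sigma> / 2 * t\<^sup>2"]
    sum_b_pairing_mirror[where b = b, OF assms(1)] sum_a_pairing_mirror[OF assms(2)]
  by simp

lemma VB_cong:
  assumes "\<And>k. k \<le> N \<Longrightarrow> C k = C' k" and "\<And>k. k \<le> N \<Longrightarrow> D k = D' k"
  shows "VB N L \<sigma> a b u C D = VB N L \<sigma> a b u C' D'"
  unfolding VB_def Let_def using assms by simp

lemma UA_unmirror_eq_VB:
  assumes "b 0 0 = -1" and "\<forall>i\<le>N. u i \<noteq> 0"
  shows "UA N L \<sigma> a b u (unmirror_grad N u C) (reflect N D) = VB N L \<sigma> a b u C D"
proof -
  have "UA N L \<sigma> a b u (unmirror_grad N u C) (reflect N D)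
      = VB N L \<sigma> a b u (mirror_grad N u (unmirror_grad N u C)) (reflect N (reflect N D))"
    by (rule VB_mirror_eq_UA[symmetric, where b = b, OF assms])
  also have "\<dots> = VB N L \<sigma> a b u C D"
    using assms(2) by (intro VB_cong) (simp_all add: mirror_grad_unmirror_grad reflect_reflect)
  finally show ?thesis .
qed

theorem theorem3p2:
  fixes N :: nat and L \<sigma> :: real and a b :: "nat \<Rightarrow> nat \<Rightarrow> real" and u :: "nat \<Rightarrow> real"
  assumes "reflexive_space TYPE('a::banach)"
    and "L > 0" and "\<sigma> > 0" and "N \<ge> 1"
    and "b 0 0 = -1"
    and "\<forall>i\<le>N. u i > 0"
    and "\<forall>i j. i \<le> j \<and> j \<le> N \<longrightarrow> u i \<le> u j"
  shows "(INF p \<in> (UNIV :: ((nat \<Rightarrow> ('a \<Rightarrow>\<^sub>L real)) \<times> (nat \<Rightarrow> 'a)) set).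
            ereal (UA N L \<sigma> a b u (fst p) (snd p)))
       = (INF p \<in> (UNIV :: ((nat \<Rightarrow> ('a \<Rightarrow>\<^sub>L real)) \<times> (nat \<Rightarrow> 'a)) set).
            ereal (VB N L \<sigma> a b u (fst p) (snd p)))"
proof -
  have u_nonzero: "\<forall>i\<le>N. u i \<noteq> 0" using assms(6) by auto
  have "range (\<lambda>p :: (nat \<Rightarrow> ('a \<Rightarrow>\<^sub>L real)) \<times> (nat \<Rightarrow> 'a). ereal (UA N L \<sigma> a b u (fst p) (snd p)))
      = range (\<lambda>p :: (nat \<Rightarrow> ('a \<Rightarrow>\<^sub>L real)) \<times> (nat \<Rightarrow> 'a). ereal (VB N L \<sigma> a b u (fst p) (snd p)))"
    by (rule range_eq_change_of_variables[where
          \<phi> = "\<lambda>p. (mirror_grad N u (fst p), reflect N (snd p))" and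
          \<psi> = "\<lambda>p. (unmirror_grad N u (fst p), reflect N (snd p))"])
       (simp_all add: VB_mirror_eq_UA UA_unmirror_eq_VB assms(5) u_nonzero)
  then show ?thesis by simp
qed

end
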